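(* Let $n=2$, $E=\{p\in\Delta_2:p_1,p_2\in\mathbb Q\}$, and $\Theta=(\overline{\Delta}_2)^E$ with the topology of pointwise convergence. Let $\nu_0$ be the infinite product of the uniform distribution on $\overline{\Delta}_2$ (so the values $\pi(p)$, $p\in E$, are i.i.d. uniform). Let $\delta>0$ be rational and define $\mu(0)=(\frac12,\frac12)$, $\mu(t+1)=\left(\frac{\mu_1(t)}{1+\delta\mu_2(t)},\frac{(1+\delta)\mu_2(t)}{1+\delta\mu_2(t)}\right)$. Then $\widehat V(t)=\frac{\mu_2(t)}{\mu_2(0)}\left(1-\frac12\frac{\delta}{1+\delta}\right)^t$ and, with $V^*(t)=\max_{\pi\in\Theta}V_\pi(t)$, $\lim_{t\to\infty}\frac1t\log\frac{\widehat V(t)}{V^*(t)}=\log\left(1-\frac12\frac\delta{1+\delta}\right)<0$.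
   Context: $\Delta_2=\{p\in(0,1)^2:p_1+p_2=1\}$, $\overline{\Delta}_2$ its closure. Relative value of a portfolio map $\pi:E\to\overline{\Delta}_2$: $V_\pi(0)=1$, $V_\pi(t+1)=V_\pi(t)\sum_{i=1}^2\pi_i(\mu(t))\mu_i(t+1)/\mu_i(t)$. $\widehat V(t)=\int_\Theta V_\pi(t)\,d\nu_0(\pi)$ is the relative value of Cover's portfolio $\widehat\pi(t)=\int\pi(\mu(t))\,d\nu_t(\pi)$, where $\nu_t(B)=\frac1{\widehat V(t)}\int_BV_\pi(t)\,d\nu_0(\pi)$. *)

theory Defs
  imports "HOL-Probability.Probability"
begin

definition open_simplex2 :: "(real \<times> real) set" where
  "open_simplex2 = {p. fst p > 0 \<and> snd p > 0 \<and> fst p + snd p = 1}"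

definition closed_simplex2 :: "(real \<times> real) set" where
  "closed_simplex2 = {p. fst p \<ge> 0 \<and> snd p \<ge> 0 \<and> fst p + snd p = 1}"

definition E2 :: "(real \<times> real) set" where
  "E2 = {p \<in> open_simplex2. fst p \<in> \<rat> \<and> snd p \<in> \<rat>}"

definition Theta :: "((real \<times> real) \<Rightarrow> (real \<times> real)) set" where
  "Theta = (\<Pi>\<^sub>E p\<in>E2. closed_simplex2)"

definition unif_simplex2 :: "(real \<times> real) measure" where
  "unif_simplex2 = distr (uniform_measure lborel {0..1}) borel (\<lambda>u. (u, 1 - u))"

definition nu0 :: "((real \<times> real) \<Rightarrow> (real \<times> real)) measure" where
  "nu0 = (\<Pi>\<^sub>M p\<in>E2. unif_simplex2)"

fun mu_ex :: "real \<Rightarrow> nat \<Rightarrow> real \<times> real" where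
  "mu_ex \<delta> 0 = (1/2, 1/2)"
| "mu_ex \<delta> (Suc t) =
     (let m = mu_ex \<delta> t in
       (fst m / (1 + \<delta> * snd m), (1 + \<delta>) * snd m / (1 + \<delta> * snd m)))"

fun relV :: "((real \<times> real) \<Rightarrow> (real \<times> real)) \<Rightarrow> (nat \<Rightarrow> real \<times> real) \<Rightarrow> nat \<Rightarrow> real" where
  "relV \<pi> \<mu> 0 = 1"
| "relV \<pi> \<mu> (Suc t) = relV \<pi> \<mu> t *
     (fst (\<pi> (\<mu> t)) * fst (\<mu> (Suc t)) / fst (\<mu> t)
      + snd (\<pi> (\<mu> t)) * snd (\<mu> (Suc t)) / snd (\<mu> t))"

definition Vhat :: "(nat \<Rightarrow> real \<times> real) \<Rightarrow> nat \<Rightarrow> real" where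
  "Vhat \<mu> t = (\<integral>\<pi>. relV \<pi> \<mu> t \<partial>nu0)"

definition Vstar :: "(nat \<Rightarrow> real \<times> real) \<Rightarrow> nat \<Rightarrow> real" where
  "Vstar \<mu> t = (SUP \<pi>\<in>Theta. relV \<pi> \<mu> t)"

end

theory Submission imports Defs begin

text \<open>
  Write r1(s), r2(s) for the one-step returns of the two assets. Every portfolio map earns
  V_pi(t) = prod_{s<t} (pi_1(mu(s)) r1(s) + pi_2(mu(s)) r2(s)). Along the example path the
  weights mu(s) are pairwise distinct rational points, so under nu_0 these factors are
  independent with mean (r1(s) + r2(s))/2, which here equals r2(s) (1 - delta/(2(1 + delta))).
  Since r1 <= r2, the best portfolio holds only the second asset and earns
  prod r2(s) = mu_2(t)/mu_2(0); hence Vhat(t)/V*(t) is exactly the t-th power of that constant.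
\<close>

definition return_fst :: "(nat \<Rightarrow> real \<times> real) \<Rightarrow> nat \<Rightarrow> real" where
  "return_fst \<mu> s = fst (\<mu> (Suc s)) / fst (\<mu> s)"

definition return_snd :: "(nat \<Rightarrow> real \<times> real) \<Rightarrow> nat \<Rightarrow> real" where
  "return_snd \<mu> s = snd (\<mu> (Suc s)) / snd (\<mu> s)"

lemma relV_eq_prod:
  "relV \<pi> \<mu> t = (\<Prod>s<t. fst (\<pi> (\<mu> s)) * return_fst \<mu> s + snd (\<pi> (\<mu> s)) * return_snd \<mu> s)"
  by (induction t) (simp_all add: return_fst_def return_snd_def mult.commute)

lemma prod_return_snd:
  assumes "\<And>s. s \<le> t \<Longrightarrow> snd (\<mu> s) \<noteq> 0"
  shows "(\<Prod>s<t. return_snd \<mu> s) = snd (\<mu> t) / snd (\<mu> 0)"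
  using assms by (induction t) (simp_all add: return_snd_def)

lemma uniform_measure_unit_interval:
  "uniform_measure lborel {0..1::real} = density lborel (\<lambda>x. ennreal (indicator {0..1} x))"
  by (simp add: uniform_measure_def ennreal_indicator divide_ennreal_def)

lemma
  fixes a b :: real
  shows integrable_unit_interval_affine:
      "integrable (uniform_measure lborel {0..1}) (\<lambda>u. u * a + (1 - u) * b)"
    and integral_unit_interval_affine:
      "(\<integral>u. u * a + (1 - u) * b \<partial>uniform_measure lborel {0..1}) = (a + b) / 2"
proof -
  have "integrable lborel (\<lambda>x. (x * a + (1 - x) * b) * indicator {0..1::real} x)"
    by (rule borel_integrable_atLeastAtMost) (intro continuous_intros)
  then show "integrable (uniform_measure lborel {0..1}) (\<lambda>u. u * a + (1 - u) * b)"
    unfolding uniform_measure_unit_interval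
    by (subst integrable_density) (auto simp: mult.commute)
  have "(\<integral>u. u * a + (1 - u) * b \<partial>uniform_measure lborel {0..1})
      = (\<integral>x. indicator {0..1::real} x *\<^sub>R (x * a + (1 - x) * b) \<partial>lborel)"
    unfolding uniform_measure_unit_interval by (subst integral_density) auto
  also have "\<dots> = (a * 1^2 / 2 + b * (1 - 1^2 / 2)) - (a * 0^2 / 2 + b * (0 - 0^2 / 2))"
    by (rule integral_FTC_atLeastAtMost[where F = "\<lambda>x. a * x^2 / 2 + b * (x - x^2 / 2)"])
      (auto intro!: derivative_eq_intros continuous_intros
        simp: has_real_derivative_iff_has_vector_derivative[symmetric] algebra_simps)
  finally show "(\<integral>u. u * a + (1 - u) * b \<partial>uniform_measure lborel {0..1}) = (a + b) / 2"
    by simp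
qed

lemma sets_unif_simplex2 [measurable_cong]: "sets unif_simplex2 = sets borel"
  by (simp add: unif_simplex2_def)

lemma prob_space_unif_simplex2: "prob_space unif_simplex2"
  unfolding unif_simplex2_def
  by (intro prob_space.prob_space_distr prob_space_uniform_measure) auto

lemma product_prob_space_unif_simplex2: "product_prob_space (\<lambda>_. unif_simplex2)"
  by (simp add: product_prob_space_def product_prob_space_axioms_def product_sigma_finite_def
      prob_space_unif_simplex2 prob_space_imp_sigma_finite)

lemma
  fixes a b :: real
  shows integrable_unif_simplex2_linear: "integrable unif_simplex2 (\<lambda>x. fst x * a + snd x * b)"
    and integral_unif_simplex2_linear:
      "(\<integral>x. fst x * a + snd x * b \<partial>unif_simplex2) = (a + b) / 2"
proof -
  have m: "(\<lambda>u::real. (u, 1 - u)) \<in> measurable (uniform_measure lborel {0..1}) borel"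
    by measurable
  have f: "(\<lambda>x::real \<times> real. fst x * a + snd x * b) \<in> borel_measurable borel"
    by (rule borel_measurable_continuous_onI) (intro continuous_intros)
  show "integrable unif_simplex2 (\<lambda>x. fst x * a + snd x * b)"
    unfolding unif_simplex2_def
    by (subst integrable_distr_eq[OF m f]) (simp add: integrable_unit_interval_affine)
  show "(\<integral>x. fst x * a + snd x * b \<partial>unif_simplex2) = (a + b) / 2"
    unfolding unif_simplex2_def
    by (subst integral_distr[OF m f]) (simp add: integral_unit_interval_affine)
qed

text \<open>Distinctness of the visited points is what makes the factors of \<open>V\<^sub>\<pi>(t)\<close> independent.\<close>

lemma Vhat_eq_prod_mean_return:
  assumes inj: "inj_on \<mu> {..<t}" and in_E: "\<mu> ` {..<t} \<subseteq> E2"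
  shows "Vhat \<mu> t = (\<Prod>s<t. (return_fst \<mu> s + return_snd \<mu> s) / 2)"
proof -
  interpret P: product_prob_space "\<lambda>_. unif_simplex2" E2
    by (rule product_prob_space_unif_simplex2)
  define J where "J = \<mu> ` {..<t}"
  define h where "h p x = fst x * return_fst \<mu> (the_inv_into {..<t} \<mu> p)
                         + snd x * return_snd \<mu> (the_inv_into {..<t} \<mu> p)" for p x
  have J: "finite J" "J \<subseteq> E2"
    using in_E by (auto simp: J_def)
  have h_mu: "h (\<mu> s) = (\<lambda>x. fst x * return_fst \<mu> s + snd x * return_snd \<mu> s)" if "s < t" for s
    using that by (intro ext) (simp add: h_def the_inv_into_f_f[OF inj])
  have h_measurable: "h p \<in> borel_measurable unif_simplex2" for p
    unfolding h_def measurable_cong_sets[OF sets_unif_simplex2 refl]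
    by (rule borel_measurable_continuous_onI) (intro continuous_intros)
  have prod_measurable:
    "(\<lambda>y. \<Prod>p\<in>J. h p (y p)) \<in> borel_measurable (Pi\<^sub>M J (\<lambda>_. unif_simplex2))"
  proof (rule borel_measurable_prod)
    fix p assume "p \<in> J"
    show "(\<lambda>y. h p (y p)) \<in> borel_measurable (Pi\<^sub>M J (\<lambda>_. unif_simplex2))"
      by (rule measurable_compose[OF measurable_component_singleton[OF \<open>p \<in> J\<close>] h_measurable])
  qed
  have "Vhat \<mu> t = (\<integral>\<pi>. (\<Prod>p\<in>J. h p (restrict \<pi> J p)) \<partial>nu0)"
    unfolding Vhat_def relV_eq_prod J_def
    by (intro Bochner_Integration.integral_cong refl) (simp add: prod.reindex[OF inj] h_mu)
  also have "\<dots> = (\<integral>y. (\<Prod>p\<in>J. h p (y p)) \<partial>distr nu0 (Pi\<^sub>M J (\<lambda>_. unif_simplex2)) (\<lambda>\<pi>. restrict \<pi> J))"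
    unfolding nu0_def
    by (subst integral_distr[OF measurable_restrict_subset[OF J(2)] prod_measurable]) simp
  also have "\<dots> = (\<integral>y. (\<Prod>p\<in>J. h p (y p)) \<partial>Pi\<^sub>M J (\<lambda>_. unif_simplex2))"
    unfolding nu0_def by (simp add: P.distr_PiM_restrict_finite J)
  also have "\<dots> = (\<Prod>p\<in>J. \<integral>x. h p x \<partial>unif_simplex2)"
    by (rule P.product_integral_prod) (auto simp: J h_def integrable_unif_simplex2_linear)
  also have "\<dots> = (\<Prod>s<t. (return_fst \<mu> s + return_snd \<mu> s) / 2)"
    unfolding J_def by (simp add: prod.reindex[OF inj] h_mu integral_unif_simplex2_linear)
  finally show ?thesis .
qed

definition hold_snd :: "real \<times> real \<Rightarrow> real \<times> real" where
  "hold_snd = restrict (\<lambda>_. (0, 1)) E2"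

lemma hold_snd_in_Theta: "hold_snd \<in> Theta"
  by (auto simp: hold_snd_def Theta_def closed_simplex2_def)

lemma relV_hold_snd:
  assumes "\<And>s. s \<le> t \<Longrightarrow> \<mu> s \<in> E2"
  shows "relV hold_snd \<mu> t = snd (\<mu> t) / snd (\<mu> 0)"
proof -
  have "snd (\<mu> s) \<noteq> 0" if "s \<le> t" for s
    using assms[OF that] by (auto simp: E2_def open_simplex2_def)
  moreover have "relV hold_snd \<mu> t = (\<Prod>s<t. return_snd \<mu> s)"
    unfolding relV_eq_prod by (intro prod.cong refl) (simp add: hold_snd_def assms)
  ultimately show ?thesis
    by (simp add: prod_return_snd)
qed

lemma relV_le_hold_snd:
  assumes \<pi>: "\<pi> \<in> Theta" and in_E: "\<And>s. s \<le> t \<Longrightarrow> \<mu> s \<in> E2"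
    and returns: "\<And>s. s < t \<Longrightarrow> 0 \<le> return_fst \<mu> s \<and> return_fst \<mu> s \<le> return_snd \<mu> s"
  shows "relV \<pi> \<mu> t \<le> relV hold_snd \<mu> t"
  unfolding relV_eq_prod[of \<pi>] relV_eq_prod[of hold_snd]
proof (intro prod_mono conjI)
  fix s assume "s \<in> {..<t}"
  then have s: "s < t" by simp
  have "\<pi> (\<mu> s) \<in> closed_simplex2"
    using \<pi> in_E[of s] s by (auto simp: Theta_def)
  then obtain a b where ab: "\<pi> (\<mu> s) = (a, b)" "0 \<le> a" "0 \<le> b" "a + b = 1"
    by (cases "\<pi> (\<mu> s)") (auto simp: closed_simplex2_def)
  have hold: "hold_snd (\<mu> s) = (0, 1)"
    using in_E[of s] s by (simp add: hold_snd_def)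
  show "0 \<le> fst (\<pi> (\<mu> s)) * return_fst \<mu> s + snd (\<pi> (\<mu> s)) * return_snd \<mu> s"
    using ab returns[OF s] by simp
  have "a * return_fst \<mu> s + b * return_snd \<mu> s \<le> a * return_snd \<mu> s + b * return_snd \<mu> s"
    using ab returns[OF s] by (simp add: mult_left_mono)
  then show "fst (\<pi> (\<mu> s)) * return_fst \<mu> s + snd (\<pi> (\<mu> s)) * return_snd \<mu> s
      \<le> fst (hold_snd (\<mu> s)) * return_fst \<mu> s + snd (hold_snd (\<mu> s)) * return_snd \<mu> s"
    using ab by (simp add: hold distrib_right[symmetric])
qed

lemma Vstar_eq_relV_hold_snd:
  assumes "\<And>s. s \<le> t \<Longrightarrow> \<mu> s \<in> E2"
    and "\<And>s. s < t \<Longrightarrow> 0 \<le> return_fst \<mu> s \<and> return_fst \<mu> s \<le> return_snd \<mu> s"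
  shows "Vstar \<mu> t = relV hold_snd \<mu> t"
  unfolding Vstar_def
  using hold_snd_in_Theta relV_le_hold_snd[OF _ assms] by (intro cSup_eq_maximum) auto

context
  fixes \<delta> :: real
  assumes \<delta>_rat: "\<delta> \<in> \<rat>" and \<delta>_pos: "\<delta> > 0"
begin

lemma mu_ex_in_E2: "mu_ex \<delta> t \<in> E2"
proof (induction t)
  case 0
  then show ?case by (simp add: E2_def open_simplex2_def)
next
  case (Suc t)
  obtain f s where m: "mu_ex \<delta> t = (f, s)" by (cases "mu_ex \<delta> t")
  with Suc have h: "f > 0" "s > 0" "f + s = 1" "f \<in> \<rat>" "s \<in> \<rat>"
    by (auto simp: E2_def open_simplex2_def)
  have d: "1 + \<delta> * s > 0" using h \<delta>_pos by (simp add: add_pos_pos)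
  have "(f + (1 + \<delta>) * s) / (1 + \<delta> * s) = 1"
    using d h by (simp add: field_simps)
  then have "f / (1 + \<delta> * s) + (1 + \<delta>) * s / (1 + \<delta> * s) = 1"
    by (simp add: add_divide_distrib)
  with h d \<delta>_rat \<delta>_pos show ?case
    by (auto simp: m Let_def E2_def open_simplex2_def intro!: Rats_divide Rats_add Rats_mult)
qed

lemma mu_ex_pos: "0 < fst (mu_ex \<delta> t)" "0 < snd (mu_ex \<delta> t)"
  using mu_ex_in_E2[of t] by (auto simp: E2_def open_simplex2_def)

lemma return_fst_mu_ex: "return_fst (mu_ex \<delta>) s = 1 / (1 + \<delta> * snd (mu_ex \<delta> s))"
  using mu_ex_pos[of s] by (simp add: return_fst_def Let_def)

lemma return_snd_mu_ex: "return_snd (mu_ex \<delta>) s = (1 + \<delta>) / (1 + \<delta> * snd (mu_ex \<delta> s))"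
  using mu_ex_pos[of s] by (simp add: return_snd_def Let_def)

lemma returns_mu_ex: "0 \<le> return_fst (mu_ex \<delta>) s \<and> return_fst (mu_ex \<delta>) s \<le> return_snd (mu_ex \<delta>) s"
  using \<delta>_pos mu_ex_pos[of s]
  by (simp add: return_fst_mu_ex return_snd_mu_ex divide_right_mono)

lemma mean_return_mu_ex:
  "(return_fst (mu_ex \<delta>) s + return_snd (mu_ex \<delta>) s) / 2
     = return_snd (mu_ex \<delta>) s * (1 - (1/2) * (\<delta> / (1 + \<delta>)))"
proof -
  have "1 + \<delta> * snd (mu_ex \<delta> s) > 0" "1 + \<delta> > 0"
    using \<delta>_pos mu_ex_pos[of s] by (simp_all add: add_pos_pos)
  then show ?thesis
    by (simp add: return_fst_mu_ex return_snd_mu_ex divide_simps) (simp add: algebra_simps)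
qed

text \<open>The weight of the second asset increases strictly, so the path never revisits a point.\<close>

lemma inj_mu_ex: "inj (mu_ex \<delta>)"
proof -
  have "strict_mono (\<lambda>t. snd (mu_ex \<delta> t))"
  proof (rule strict_monoI_Suc)
    fix t
    have "snd (mu_ex \<delta> t) < 1"
      using mu_ex_in_E2[of t] by (auto simp: E2_def open_simplex2_def)
    then have "1 < return_snd (mu_ex \<delta>) t"
      using \<delta>_pos mu_ex_pos[of t]
      by (simp add: return_snd_mu_ex mult_strict_left_mono[of _ 1 \<delta>, simplified] add_pos_pos)
    then show "snd (mu_ex \<delta> t) < snd (mu_ex \<delta> (Suc t))"
      using mu_ex_pos[of t] by (simp add: return_snd_def pos_less_divide_eq)
  qed
  then show ?thesis
    by (metis injI strict_mono_eq)
qed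

lemma Vhat_mu_ex:
  "Vhat (mu_ex \<delta>) t = relV hold_snd (mu_ex \<delta>) t * (1 - (1/2) * (\<delta> / (1 + \<delta>))) ^ t"
proof -
  have "Vhat (mu_ex \<delta>) t = (\<Prod>s<t. (return_fst (mu_ex \<delta>) s + return_snd (mu_ex \<delta>) s) / 2)"
    using inj_mu_ex mu_ex_in_E2
    by (intro Vhat_eq_prod_mean_return) (auto intro: inj_on_subset)
  also have "\<dots> = (\<Prod>s<t. return_snd (mu_ex \<delta>) s) * (1 - (1/2) * (\<delta> / (1 + \<delta>))) ^ t"
    by (simp add: mean_return_mu_ex prod.distrib)
  also have "(\<Prod>s<t. return_snd (mu_ex \<delta>) s) = relV hold_snd (mu_ex \<delta>) t"
    unfolding relV_eq_prod by (intro prod.cong refl) (simp add: hold_snd_def mu_ex_in_E2)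
  finally show ?thesis .
qed

lemma Vstar_mu_ex: "Vstar (mu_ex \<delta>) t = relV hold_snd (mu_ex \<delta>) t"
  by (intro Vstar_eq_relV_hold_snd mu_ex_in_E2 returns_mu_ex)

lemma relV_hold_snd_mu_ex: "relV hold_snd (mu_ex \<delta>) t = snd (mu_ex \<delta> t) / snd (mu_ex \<delta> 0)"
  by (intro relV_hold_snd mu_ex_in_E2)

end

theorem proposition3p7:
  fixes \<delta> :: real
  assumes "\<delta> \<in> \<rat>" and "\<delta> > 0"
  shows "(\<forall>t. Vhat (mu_ex \<delta>) t
           = snd (mu_ex \<delta> t) / snd (mu_ex \<delta> 0) * (1 - (1/2) * (\<delta> / (1 + \<delta>))) ^ t)
    \<and> (\<forall>t. \<exists>\<pi>\<in>Theta. relV \<pi> (mu_ex \<delta>) t = Vstar (mu_ex \<delta>) t)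
    \<and> ((\<lambda>t. (1 / real t) * ln (Vhat (mu_ex \<delta>) t / Vstar (mu_ex \<delta>) t))
           \<longlongrightarrow> ln (1 - (1/2) * (\<delta> / (1 + \<delta>)))) at_top
    \<and> ln (1 - (1/2) * (\<delta> / (1 + \<delta>))) < 0"
proof -
  define c where "c = 1 - (1/2) * (\<delta> / (1 + \<delta>))"
  have c: "0 < c" "c < 1"
    using assms by (auto simp: c_def field_simps)
  have ratio: "Vhat (mu_ex \<delta>) t / Vstar (mu_ex \<delta>) t = c ^ t" for t
    using mu_ex_pos[OF assms, of t] mu_ex_pos[OF assms, of 0]
    by (simp add: Vhat_mu_ex[OF assms] Vstar_mu_ex[OF assms] relV_hold_snd_mu_ex[OF assms] c_def)
  have "\<forall>\<^sub>F t in at_top. ln c = (1 / real t) * ln (Vhat (mu_ex \<delta>) t / Vstar (mu_ex \<delta>) t)"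
    using eventually_ge_at_top[of "1::nat"] by eventually_elim (simp add: ratio ln_realpow)
  then have "((\<lambda>t. (1 / real t) * ln (Vhat (mu_ex \<delta>) t / Vstar (mu_ex \<delta>) t)) \<longlongrightarrow> ln c) at_top"
    by (rule Lim_transform_eventually[OF tendsto_const])
  moreover have "\<exists>\<pi>\<in>Theta. relV \<pi> (mu_ex \<delta>) t = Vstar (mu_ex \<delta>) t" for t
    using hold_snd_in_Theta Vstar_mu_ex[OF assms] by metis
  ultimately show ?thesis
    using c by (simp add: c_def Vhat_mu_ex[OF assms] relV_hold_snd_mu_ex[OF assms])
qed

end
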